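(* Let $k$ be an algebraically closed field of characteristic zero and let $G=N\rtimes H$ be a finite group with normal subgroup $N$ and complement $H$, so that $(G,H,N)$ is a factorized group. Then the bismash product $k^H\# kN$ is isomorphic as a $k$-algebra to the group algebra $k(\mathbb Z_{|H|}\times N)$.
   Context: A factorized group $(G,L,F)$ is a finite group $G$ with subgroups $L,F$ such that $L\cap F=1$ and $G=LF$; each $lf$ ($l\in L$, $f\in F$) is uniquely $({}^{[l]}f)(l^{[f]})$ with ${}^{[l]}f\in F$, $l^{[f]}\in L$. The bismash product $k^L\# kF$ is the algebra with basis $l\# f$ ($l\in L$, $f\in F$) and multiplication $(l\# f)(\bar l\#\bar f)=\delta_{l^{[f]},\bar l}\, l\#(f\bar f)$, unit $\sum_{l} l\#1$. Here $L=H$ and $F=N$. *)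

theory Defs
  imports "HOL-Algebra.Algebra" "HOL-Computational_Algebra.Polynomial"
begin

definition alg_closed :: "'k::field itself \<Rightarrow> bool" where
  "alg_closed _ \<longleftrightarrow> (\<forall>p::'k poly. degree p > 0 \<longrightarrow> (\<exists>x. poly p x = 0))"

definition factorized_group :: "('g, 'm) monoid_scheme \<Rightarrow> 'g set \<Rightarrow> 'g set \<Rightarrow> bool" where
  "factorized_group G L F \<longleftrightarrow> group G \<and> finite (carrier G) \<and> subgroup L G \<and> subgroup F G
     \<and> L \<inter> F = {\<one>\<^bsub>G\<^esub>} \<and> L <#>\<^bsub>G\<^esub> F = carrier G"

definition ract :: "('g, 'm) monoid_scheme \<Rightarrow> 'g set \<Rightarrow> 'g set \<Rightarrow> 'g \<Rightarrow> 'g \<Rightarrow> 'g" where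
  "ract G L F l f = (THE l'. l' \<in> L \<and> (\<exists>f'\<in>F. l \<otimes>\<^bsub>G\<^esub> f = f' \<otimes>\<^bsub>G\<^esub> l'))"

definition lact :: "('g, 'm) monoid_scheme \<Rightarrow> 'g set \<Rightarrow> 'g set \<Rightarrow> 'g \<Rightarrow> 'g \<Rightarrow> 'g" where
  "lact G L F l f = (THE f'. f' \<in> F \<and> (\<exists>l'\<in>L. l \<otimes>\<^bsub>G\<^esub> f = f' \<otimes>\<^bsub>G\<^esub> l'))"

text \<open>Bismash product k^L # kF: an element is the coefficient function on basis pairs (l,f),
  i.e. the element sum a(l,f) l#f; supported on L \<times> F.  Addition and scalar multiplication
  are pointwise.  Multiplication extends (l#f)(l'#f') = \<delta>_{l^[f],l'} l#(f f') bilinearly.\<close>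
definition bismash_carrier :: "'g set \<Rightarrow> 'g set \<Rightarrow> ('g \<times> 'g \<Rightarrow> 'k::field) set" where
  "bismash_carrier L F = {a. \<forall>x. x \<notin> L \<times> F \<longrightarrow> a x = 0}"

definition bismash_mult :: "('g, 'm) monoid_scheme \<Rightarrow> 'g set \<Rightarrow> 'g set
    \<Rightarrow> ('g \<times> 'g \<Rightarrow> 'k::field) \<Rightarrow> ('g \<times> 'g \<Rightarrow> 'k) \<Rightarrow> ('g \<times> 'g \<Rightarrow> 'k)" where
  "bismash_mult G L F a b = (\<lambda>(l, g).
     if l \<in> L \<and> g \<in> F then
       (\<Sum>(f, f') \<in> F \<times> F. if f \<otimes>\<^bsub>G\<^esub> f' = g then a (l, f) * b (ract G L F l f, f') else 0)
     else 0)"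

definition bismash_one :: "('g, 'm) monoid_scheme \<Rightarrow> 'g set \<Rightarrow> 'g set \<Rightarrow> ('g \<times> 'g \<Rightarrow> 'k::field)" where
  "bismash_one G L F = (\<lambda>(l, f). if l \<in> L \<and> f = \<one>\<^bsub>G\<^esub> then 1 else 0)"

definition galg_carrier :: "('g, 'm) monoid_scheme \<Rightarrow> ('g \<Rightarrow> 'k::field) set" where
  "galg_carrier K = {a. \<forall>x. x \<notin> carrier K \<longrightarrow> a x = 0}"

definition galg_mult :: "('g, 'm) monoid_scheme \<Rightarrow> ('g \<Rightarrow> 'k::field) \<Rightarrow> ('g \<Rightarrow> 'k) \<Rightarrow> ('g \<Rightarrow> 'k)" where
  "galg_mult K a b = (\<lambda>z. if z \<in> carrier K then
       (\<Sum>x \<in> carrier K. a x * b (inv\<^bsub>K\<^esub> x \<otimes>\<^bsub>K\<^esub> z)) else 0)"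

definition galg_one :: "('g, 'm) monoid_scheme \<Rightarrow> ('g \<Rightarrow> 'k::field)" where
  "galg_one K = (\<lambda>z. if z = \<one>\<^bsub>K\<^esub> then 1 else 0)"

definition kalg_iso ::
  "('a \<Rightarrow> 'k::field) set \<Rightarrow> (('a \<Rightarrow> 'k) \<Rightarrow> ('a \<Rightarrow> 'k) \<Rightarrow> ('a \<Rightarrow> 'k)) \<Rightarrow> ('a \<Rightarrow> 'k)
   \<Rightarrow> ('b \<Rightarrow> 'k) set \<Rightarrow> (('b \<Rightarrow> 'k) \<Rightarrow> ('b \<Rightarrow> 'k) \<Rightarrow> ('b \<Rightarrow> 'k)) \<Rightarrow> ('b \<Rightarrow> 'k)
   \<Rightarrow> (('a \<Rightarrow> 'k) \<Rightarrow> ('b \<Rightarrow> 'k)) \<Rightarrow> bool" where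
  "kalg_iso A mA oA B mB oB \<phi> \<longleftrightarrow>
     bij_betw \<phi> A B
     \<and> (\<forall>a\<in>A. \<forall>b\<in>A. \<phi> (\<lambda>x. a x + b x) = (\<lambda>y. \<phi> a y + \<phi> b y))
     \<and> (\<forall>c. \<forall>a\<in>A. \<phi> (\<lambda>x. c * a x) = (\<lambda>y. c * \<phi> a y))
     \<and> (\<forall>a\<in>A. \<forall>b\<in>A. \<phi> (mA a b) = mB (\<phi> a) (\<phi> b))
     \<and> \<phi> oA = oB"

end

theory Submission
  imports Defs
begin

text \<open>
  Because \<open>N\<close> is normal, \<open>l f = (l f l\<inverse>) l\<close> shows that the right action \<open>l\<^bsup>[f]\<^esup>\<close> is trivial, so
  \<open>k\<^sup>H # kN\<close> is just the algebra of functions \<open>H \<rightarrow> kN\<close> with pointwise product.  As \<open>k\<close> is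
  algebraically closed of characteristic zero, it has exactly \<open>n = |H|\<close> roots of unity of order
  dividing \<open>n\<close>; labelling the elements of \<open>H\<close> by them identifies \<open>H\<close> with the dual of \<open>\<int>\<^sub>n\<close>.
  The discrete Fourier transform in the \<open>H\<close>-variable then turns the pointwise product into
  convolution over \<open>\<int>\<^sub>n\<close>, which is an isomorphism onto \<open>k(\<int>\<^sub>n \<times> N)\<close>.
\<close>

lemma card_roots_rsquarefree:
  fixes p :: "'k::field_char_0 poly"
  assumes "alg_closed TYPE('k)" and "rsquarefree p"
  shows "card {x. poly p x = 0} = degree p"
  using assms(2)
proof (induction "degree p" arbitrary: p)
  case 0
  then have "p \<noteq> 0" by (simp add: rsquarefree_def)
  moreover from 0 obtain c where "p = [:c:]" by (metis degree_eq_zeroE)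
  ultimately have "{x. poly p x = 0} = {}" by auto
  with 0 show ?case by simp
next
  case (Suc d p)
  then have p0: "p \<noteq> 0" by (simp add: rsquarefree_def)
  from assms(1) Suc.hyps(2) obtain r where "poly p r = 0"
    unfolding alg_closed_def by (metis zero_less_Suc)
  then obtain q where pq: "p = [:-r, 1:] * q" using poly_eq_0_iff_dvd by blast
  with p0 have q0: "q \<noteq> 0" by auto
  have "degree p = degree [:-r, 1:] + degree q"
    unfolding pq by (rule degree_mult_eq) (use q0 in auto)
  then have "degree q = d" using Suc.hyps(2) by simp
  have order_p: "order a p = order a [:-r, 1:] + order a q" for a
    using p0 pq order_mult by metis
  have order_p_le: "order a p \<le> 1" for a
    using Suc.prems unfolding rsquarefree_def by (metis le_refl zero_le)
  have "order r [:-r, 1:] = 1" using order_power_n_n[of r 1] by simp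
  then have "order r q = 0" using order_p_le[of r] order_p[of r] by linarith
  then have "poly q r \<noteq> 0" using order_root q0 by blast
  moreover have "rsquarefree q"
    unfolding rsquarefree_def using q0 order_p_le order_p by (metis add_leE le_eq_less_or_eq less_one)
  moreover have "{x. poly p x = 0} = insert r {x. poly q x = 0}" using pq by auto
  ultimately show ?case
    using Suc.hyps \<open>degree q = d\<close> poly_roots_finite[OF q0] by simp
qed

lemma card_roots_of_unity:
  assumes "alg_closed TYPE('k::field_char_0)" and "0 < n"
  shows "card {x::'k. x ^ n = 1} = n"
proof -
  define p :: "'k poly" where "p = monom 1 n + [:-1:]"
  have poly_p: "poly p x = x ^ n - 1" for x by (simp add: p_def poly_monom)
  have "degree p = n" using assms(2) unfolding p_def
    by (simp add: degree_add_eq_left degree_monom_eq)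
  have "pderiv p = monom (of_nat n) (n - 1)" unfolding p_def
    by (simp add: pderiv_monom pderiv_add pderiv_pCons)
  then have poly_dp: "poly (pderiv p) x = of_nat n * x ^ (n - 1)" for x by (simp add: poly_monom)
  have "rsquarefree p"
    unfolding rsquarefree_roots poly_p poly_dp using assms(2) by (auto simp: power_0_left)
  moreover have "{x. poly p x = 0} = {x. x ^ n = 1}" by (simp add: poly_p)
  ultimately show ?thesis using card_roots_rsquarefree[OF assms(1)] \<open>degree p = n\<close> by metis
qed

lemma
  fixes n :: nat
  assumes "0 < n"
  shows finite_roots_of_unity: "finite {x::'k::field. x ^ n = 1}"
    and card_roots_of_unity_le: "card {x::'k::field. x ^ n = 1} \<le> n"
proof -
  define p :: "'k poly" where "p = monom 1 n + [:-1:]"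
  have "degree p = n" using assms unfolding p_def
    by (simp add: degree_add_eq_left degree_monom_eq)
  with assms have "p \<noteq> 0" by auto
  moreover have "{x. poly p x = 0} = {x. x ^ n = 1}" by (auto simp: p_def poly_monom)
  ultimately show "finite {x::'k. x ^ n = 1}" "card {x::'k. x ^ n = 1} \<le> n"
    using poly_roots_finite card_poly_roots_bound \<open>degree p = n\<close> by metis+
qed

lemma power_int_mod_root_of_unity:
  fixes x :: "'k::field"
  assumes "x ^ n = 1"
  shows "x powi (k mod int n) = x powi k"
proof (cases "n = 0")
  case False
  then have "x \<noteq> 0" using assms by (metis power_0_left zero_neq_one)
  have "x powi (int n * (k div int n)) = 1"
    using assms by (simp add: power_int_mult)
  then have "x powi k = x powi (k mod int n + int n * (k div int n))" by simp
  also have "\<dots> = x powi (k mod int n)"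
    by (subst power_int_add) (use \<open>x \<noteq> 0\<close> \<open>x powi (int n * (k div int n)) = 1\<close> in simp_all)
  finally show ?thesis ..
qed simp

lemma sum_power_int_root_of_unity:
  fixes x :: "'k::field"
  assumes "x ^ n = 1"
  shows "(\<Sum>m\<in>{0..<int n}. x powi m) = (if x = 1 then of_nat n else 0)"
proof -
  have "{0..<int n} = int ` {..<n}" by (simp add: image_int_atLeastLessThan lessThan_atLeast0)
  then have "(\<Sum>m\<in>{0..<int n}. x powi m) = (\<Sum>k<n. x ^ k)" by (simp add: sum.reindex)
  with assms show ?thesis by (simp add: sum_gp_strict)
qed

lemma sum_roots_of_unity_power_int:
  assumes card: "card {x::'k::field. x ^ n = 1} = n" and "0 < n"
  shows "(\<Sum>r | r ^ n = 1. r powi k) = (if int n dvd k then of_nat n else (0::'k))"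
proof (cases "int n dvd k")
  case True
  have "r powi k = 1" if "r ^ n = 1" for r :: 'k
    using power_int_mod_root_of_unity[OF that, of k] True by simp
  with True card show ?thesis by simp
next
  case False
  define R where "R = {x::'k. x ^ n = 1}"
  have nonzero: "r \<noteq> 0" if "r \<in> R" for r using that \<open>0 < n\<close> by (auto simp: R_def zero_power)
  define e where "e = nat (k mod int n)"
  have "0 < e" using False \<open>0 < n\<close> pos_mod_sign[of "int n" k] unfolding e_def by (auto simp: dvd_eq_mod_eq_0)
  have "e < n" using \<open>0 < n\<close> unfolding e_def by (simp add: nat_less_iff)
  have powi_k: "r powi k = r ^ e" if "r \<in> R" for r
    using power_int_mod_root_of_unity[of r n k] that \<open>0 < n\<close>
    by (simp add: R_def e_def power_int_nonneg_exp)
  \<comment> \<open>at most \<open>e < n\<close> roots of unity satisfy \<open>r\<^sup>e = 1\<close>, so some \<open>s\<close> has \<open>s powi k \<noteq> 1\<close>;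
      multiplication by \<open>s\<close> permutes \<open>R\<close> and scales the sum by \<open>s powi k\<close>\<close>
  have "card {r\<in>R. r powi k = 1} \<le> card {x::'k. x ^ e = 1}"
    using powi_k by (intro card_mono finite_roots_of_unity \<open>0 < e\<close>) auto
  also have "\<dots> < card R"
    using card_roots_of_unity_le[OF \<open>0 < e\<close>, where 'k='k] \<open>e < n\<close> card unfolding R_def by linarith
  finally have "{r\<in>R. r powi k = 1} \<noteq> R" by auto
  then obtain s where s: "s \<in> R" "s powi k \<noteq> 1" by blast
  have "(\<Sum>r\<in>R. (s * r) powi k) = (\<Sum>r\<in>R. r powi k)"
  proof (rule sum.reindex_bij_witness[of R "\<lambda>r. inverse s * r" "\<lambda>r. s * r"])
  qed (use s nonzero in \<open>auto simp: R_def power_mult_distrib power_inverse\<close>)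
  then have "s powi k * (\<Sum>r\<in>R. r powi k) = (\<Sum>r\<in>R. r powi k)"
    by (simp add: power_int_mult_distrib sum_distrib_left)
  then have "(s powi k - 1) * (\<Sum>r\<in>R. r powi k) = 0" by (simp add: algebra_simps)
  with s False show ?thesis by (simp add: R_def)
qed

lemma (in group) complement_factor_unique:
  assumes "subgroup N G" "subgroup H G" "H \<inter> N = {\<one>}"
    and "f \<in> N" "f' \<in> N" "l \<in> H" "l' \<in> H" "f \<otimes> l = f' \<otimes> l'"
  shows "l = l'"
proof -
  have f: "f \<in> carrier G" using subgroup.mem_carrier[OF assms(1,4)] .
  have f': "f' \<in> carrier G" using subgroup.mem_carrier[OF assms(1,5)] .
  have l: "l \<in> carrier G" using subgroup.mem_carrier[OF assms(2,6)] .
  have l': "l' \<in> carrier G" using subgroup.mem_carrier[OF assms(2,7)] .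
  have "l' = inv f' \<otimes> (f \<otimes> l)"
    using assms(8) by (rule iffD2[OF inv_solve_left[OF l' f' m_closed[OF f l]]])
  then have "l' = inv f' \<otimes> f \<otimes> l" by (simp only: m_assoc[OF inv_closed[OF f'] f l])
  then have "inv f' \<otimes> f = l' \<otimes> inv l"
    by (rule iffD2[OF inv_solve_right[OF m_closed[OF inv_closed[OF f'] f] l' l]])
  moreover have "inv f' \<otimes> f \<in> N"
    using subgroup.m_closed[OF assms(1) subgroup.m_inv_closed[OF assms(1,5)] assms(4)] .
  moreover have "l' \<otimes> inv l \<in> H"
    using subgroup.m_closed[OF assms(2,7) subgroup.m_inv_closed[OF assms(2,6)]] .
  ultimately have "l' \<otimes> inv l \<in> H \<inter> N" by (metis IntI)
  then have "\<one> = l' \<otimes> inv l" using assms(3) by simp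
  then have "l' = \<one> \<otimes> l" by (rule iffD1[OF inv_solve_right[OF one_closed l' l]])
  then show ?thesis using l by simp
qed

lemma (in group) ract_normal_complement:
  assumes "N \<lhd> G" "subgroup H G" "H \<inter> N = {\<one>}" "l \<in> H" "f \<in> N"
  shows "ract G H N l f = l"
  unfolding ract_def
proof (rule the_equality)
  have N: "subgroup N G" using assms(1) by (rule normal_imp_subgroup)
  have l: "l \<in> carrier G" using subgroup.mem_carrier[OF assms(2,4)] .
  have f: "f \<in> carrier G" using subgroup.mem_carrier[OF N assms(5)] .
  have conj: "l \<otimes> f \<otimes> inv l \<in> N" using normal.inv_op_closed2[OF assms(1) l assms(5)] .
  have swap: "l \<otimes> f = (l \<otimes> f \<otimes> inv l) \<otimes> l" using l f by (simp add: m_assoc)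
  show "l \<in> H \<and> (\<exists>f'\<in>N. l \<otimes> f = f' \<otimes> l)" using assms(4) conj swap by blast
  fix l' assume "l' \<in> H \<and> (\<exists>f'\<in>N. l \<otimes> f = f' \<otimes> l')"
  then obtain f' where l': "l' \<in> H" and f': "f' \<in> N" and eq: "l \<otimes> f = f' \<otimes> l'" by blast
  have "(l \<otimes> f \<otimes> inv l) \<otimes> l = f' \<otimes> l'" by (rule trans[OF swap[symmetric] eq])
  then show "l' = l" using complement_factor_unique[OF N assms(2,3) conj f' assms(4) l'] by simp
qed

lemma (in group) bismash_mult_normal_complement:
  assumes "N \<lhd> G" "subgroup H G" "H \<inter> N = {\<one>}" "finite N"
  shows "bismash_mult G H N a b (l, g) =
    (if l \<in> H \<and> g \<in> N then \<Sum>f\<in>N. a (l, f) * b (l, inv f \<otimes> g) else 0)"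
proof (cases "l \<in> H \<and> g \<in> N")
  case True
  have N: "subgroup N G" using assms(1) by (rule normal_imp_subgroup)
  have solve: "f \<otimes> f' = g \<longleftrightarrow> f' = inv f \<otimes> g" if "f \<in> N" "f' \<in> N" for f f'
    using inv_solve_left[OF subgroup.mem_carrier[OF N that(2)] subgroup.mem_carrier[OF N that(1)]
        subgroup.mem_carrier[OF N]] True by auto
  have ract: "ract G H N l f = l" if "f \<in> N" for f
    using ract_normal_complement[OF assms(1-3)] True that by blast
  have "bismash_mult G H N a b (l, g)
      = (\<Sum>f\<in>N. \<Sum>f'\<in>N. if f' = inv f \<otimes> g then a (l, f) * b (l, f') else 0)"
    using True unfolding bismash_mult_def sum.cartesian_product[symmetric]
    by (auto simp: solve ract intro!: sum.cong)
  also have "\<dots> = (\<Sum>f\<in>N. a (l, f) * b (l, inv f \<otimes> g))"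
    using assms(4) True
    by (intro sum.cong refl) (simp add: subgroup.m_closed[OF N] subgroup.m_inv_closed[OF N])
  finally show ?thesis using True by simp
qed (auto simp: bismash_mult_def)

lemma galg_mult_integer_mod_group_DirProd:
  assumes "group G" "subgroup N G" "0 < n"
  shows "galg_mult (integer_mod_group n \<times>\<times> G\<lparr>carrier := N\<rparr>) a b (m, g) =
    (if m \<in> {0..<int n} \<and> g \<in> N then
       \<Sum>m'\<in>{0..<int n}. \<Sum>f\<in>N. a (m', f) * b ((m - m') mod int n, inv\<^bsub>G\<^esub> f \<otimes>\<^bsub>G\<^esub> g)
     else 0)"
proof -
  have "group (G\<lparr>carrier := N\<rparr>)" using group.subgroup_imp_group[OF assms(1,2)] .
  then have inv: "inv\<^bsub>integer_mod_group n \<times>\<times> G\<lparr>carrier := N\<rparr>\<^esub> (m', f) = ((- m') mod int n, inv\<^bsub>G\<^esub> f)"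
    if "m' \<in> {0..<int n}" "f \<in> N" for m' f
    using that assms by (simp add: carrier_integer_mod_group group.m_inv_consistent)
  have "((- m') mod int n + m) mod int n = (m - m') mod int n" for m'
    by (simp add: mod_add_left_eq)
  with assms(3) inv show ?thesis
    by (auto simp: galg_mult_def carrier_integer_mod_group sum.cartesian_product
        intro!: sum.cong)
qed

locale root_of_unity_labelling =
  fixes H :: "'h set" and n :: nat and \<rho> :: "'h \<Rightarrow> 'k::field_char_0"
  assumes card_H: "card H = n" and n_pos: "0 < n"
    and bij_\<rho>: "bij_betw \<rho> H {x. x ^ n = 1}"
begin

lemma finite_H: "finite H"
  using card_H n_pos card.infinite by fastforce

lemma card_roots: "card {x::'k. x ^ n = 1} = n"
  using bij_betw_same_card[OF bij_\<rho>] card_H by simp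

lemma rho_pow_n: "l \<in> H \<Longrightarrow> \<rho> l ^ n = 1"
  using bij_\<rho> by (auto simp: bij_betw_def)

lemma rho_nonzero: "l \<in> H \<Longrightarrow> \<rho> l \<noteq> 0"
  using rho_pow_n[of l] n_pos by (auto simp: zero_power)

lemma orthogonality_exponents:
  assumes "l \<in> H" "l' \<in> H"
  shows "(\<Sum>m\<in>{0..<int n}. \<rho> l powi m * \<rho> l' powi (- m)) = (if l = l' then of_nat n else 0)"
proof -
  have "\<rho> l powi m * \<rho> l' powi (- m) = (\<rho> l / \<rho> l') powi m" for m
    by (simp add: power_int_minus power_int_divide_distrib field_simps)
  moreover have "(\<rho> l / \<rho> l') ^ n = 1" using assms by (simp add: rho_pow_n power_divide)
  moreover have "\<rho> l / \<rho> l' = 1 \<longleftrightarrow> l = l'"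
    using assms rho_nonzero bij_\<rho> by (auto simp: bij_betw_def inj_on_def)
  ultimately have "(\<Sum>m\<in>{0..<int n}. \<rho> l powi m * \<rho> l' powi (- m))
      = (\<Sum>m\<in>{0..<int n}. (\<rho> l / \<rho> l') powi m)" by (simp only:)
  also have "\<dots> = (if \<rho> l / \<rho> l' = 1 then of_nat n else 0)"
    by (rule sum_power_int_root_of_unity) fact
  also have "\<dots> = (if l = l' then of_nat n else 0)" by (simp only: \<open>\<rho> l / \<rho> l' = 1 \<longleftrightarrow> l = l'\<close>)
  finally show ?thesis .
qed

lemma sum_labels_powi: "(\<Sum>l\<in>H. \<rho> l powi k) = (if int n dvd k then of_nat n else 0)"
  using sum.reindex_bij_betw[OF bij_\<rho>, of "\<lambda>r. r powi k"]
    sum_roots_of_unity_power_int[OF card_roots n_pos] by simp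

lemma orthogonality_labels:
  assumes "m \<in> {0..<int n}" "m' \<in> {0..<int n}"
  shows "(\<Sum>l\<in>H. \<rho> l powi m * \<rho> l powi (- m')) = (if m = m' then of_nat n else 0)"
proof -
  have "\<rho> l powi m * \<rho> l powi (- m') = \<rho> l powi (m - m')" if "l \<in> H" for l
    using rho_nonzero[OF that] by (simp add: power_int_diff power_int_minus field_simps)
  moreover have "int n dvd m - m' \<longleftrightarrow> m = m'"
    using assms by (simp flip: mod_eq_dvd_iff)
  ultimately show ?thesis using sum_labels_powi[of "m - m'"] by simp
qed

text \<open>Frequencies \<open>m \<in> {0..<n}\<close> are the elements of \<open>integer_mod_group n\<close>, the model of \<open>\<int>\<^sub>n\<close>.\<close>

definition fourier :: "('h \<Rightarrow> 'k) \<Rightarrow> int \<Rightarrow> 'k" where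
  "fourier u m = (\<Sum>l\<in>H. u l * \<rho> l powi (- m)) / of_nat n"

definition fourier_inv :: "(int \<Rightarrow> 'k) \<Rightarrow> 'h \<Rightarrow> 'k" where
  "fourier_inv v l = (\<Sum>m\<in>{0..<int n}. v m * \<rho> l powi m)"

lemma fourier_inv_fourier:
  assumes "l \<in> H"
  shows "fourier_inv (fourier u) l = u l"
proof -
  have "fourier_inv (fourier u) l
      = (\<Sum>l'\<in>H. u l' / of_nat n * (\<Sum>m\<in>{0..<int n}. \<rho> l powi m * \<rho> l' powi (- m)))"
    unfolding fourier_inv_def fourier_def
    by (simp add: sum_distrib_left sum_distrib_right sum_divide_distrib mult_ac) (rule sum.swap)
  also have "\<dots> = u l" using assms finite_H n_pos
    by (simp add: orthogonality_exponents if_distrib cong: if_cong)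
  finally show ?thesis .
qed

lemma fourier_fourier_inv:
  assumes "m \<in> {0..<int n}"
  shows "fourier (fourier_inv v) m = v m"
proof -
  have "fourier (fourier_inv v) m
      = (\<Sum>m'\<in>{0..<int n}. v m' / of_nat n * (\<Sum>l\<in>H. \<rho> l powi m' * \<rho> l powi (- m)))"
    unfolding fourier_inv_def fourier_def
    by (simp add: sum_distrib_left sum_distrib_right sum_divide_distrib mult_ac) (rule sum.swap)
  also have "\<dots> = v m" using assms n_pos
    by (simp add: orthogonality_labels if_distrib cong: if_cong)
  finally show ?thesis .
qed

lemma fourier_sum: "fourier (\<lambda>l. \<Sum>i\<in>I. w i l) m = (\<Sum>i\<in>I. fourier (w i) m)"
  unfolding fourier_def by (simp add: sum_distrib_right sum_divide_distrib) (rule sum.swap)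

lemma fourier_convolution:
  "(\<Sum>m'\<in>{0..<int n}. fourier u m' * fourier v ((m - m') mod int n)) = fourier (\<lambda>l. u l * v l) m"
proof -
  define c where "c l l' = u l * v l' * \<rho> l' powi (- m) / of_nat n / of_nat n" for l l'
  have shift: "\<rho> l powi (- ((m - m') mod int n)) = \<rho> l powi (- m) * \<rho> l powi m'"
    if "l \<in> H" for l m'
    using power_int_mod_root_of_unity[OF rho_pow_n[OF that], of "m - m'"] rho_nonzero[OF that]
    by (simp add: power_int_minus power_int_diff field_simps)
  have "(\<Sum>m'\<in>{0..<int n}. fourier u m' * fourier v ((m - m') mod int n))
      = (\<Sum>m'\<in>{0..<int n}. \<Sum>l\<in>H. \<Sum>l'\<in>H. c l l' * (\<rho> l' powi m' * \<rho> l powi (- m')))"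
    by (simp add: fourier_def shift c_def sum_product sum_divide_distrib mult_ac cong: sum.cong)
  also have "\<dots> = (\<Sum>l\<in>H. \<Sum>l'\<in>H. c l l' * (\<Sum>m'\<in>{0..<int n}. \<rho> l' powi m' * \<rho> l powi (- m')))"
    by (simp add: sum_distrib_left sum.swap[where A = "{0..<int n}"])
  also have "\<dots> = (\<Sum>l\<in>H. c l l * of_nat n)"
    using finite_H by (simp add: orthogonality_exponents if_distrib cong: sum.cong if_cong)
  also have "\<dots> = fourier (\<lambda>l. u l * v l) m"
    using n_pos by (simp add: c_def fourier_def sum_divide_distrib)
  finally show ?thesis .
qed

lemma fourier_one:
  assumes "m \<in> {0..<int n}"
  shows "fourier (\<lambda>_. 1) m = (if m = 0 then 1 else 0)"
  using orthogonality_labels[of 0 m] assms n_pos by (simp add: fourier_def)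

lemma fourier_cong:
  assumes "\<And>l. l \<in> H \<Longrightarrow> u l = u' l"
  shows "fourier u m = fourier u' m"
  unfolding fourier_def by (intro sum.cong refl arg_cong2[where f = "(/)"]) (simp add: assms)

lemma fourier_inv_cong:
  assumes "\<And>m. m \<in> {0..<int n} \<Longrightarrow> v m = v' m"
  shows "fourier_inv v l = fourier_inv v' l"
  unfolding fourier_inv_def by (intro sum.cong refl) (simp add: assms)

lemma fourier_add: "fourier (\<lambda>l. u l + v l) m = fourier u m + fourier v m"
  unfolding fourier_def by (simp add: sum.distrib distrib_right add_divide_distrib)

lemma fourier_scale: "fourier (\<lambda>l. c * u l) m = c * fourier u m"
  unfolding fourier_def by (simp add: sum_distrib_left mult_ac)

definition partial_fourier :: "'g set \<Rightarrow> ('h \<times> 'g \<Rightarrow> 'k) \<Rightarrow> int \<times> 'g \<Rightarrow> 'k" where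
  "partial_fourier N a =
    (\<lambda>(m, f). if m \<in> {0..<int n} \<and> f \<in> N then fourier (\<lambda>l. a (l, f)) m else 0)"

definition partial_fourier_inv :: "'g set \<Rightarrow> (int \<times> 'g \<Rightarrow> 'k) \<Rightarrow> 'h \<times> 'g \<Rightarrow> 'k" where
  "partial_fourier_inv N b =
    (\<lambda>(l, f). if l \<in> H \<and> f \<in> N then fourier_inv (\<lambda>m. b (m, f)) l else 0)"

lemma partial_fourier_inv_partial_fourier:
  assumes "\<forall>x. x \<notin> H \<times> N \<longrightarrow> a x = 0"
  shows "partial_fourier_inv N (partial_fourier N a) = a"
proof (intro ext, clarify)
  fix l f
  show "partial_fourier_inv N (partial_fourier N a) (l, f) = a (l, f)"
  proof (cases "l \<in> H \<and> f \<in> N")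
    case True
    then have "fourier_inv (\<lambda>m. partial_fourier N a (m, f)) l = fourier_inv (fourier (\<lambda>l. a (l, f))) l"
      by (intro fourier_inv_cong) (simp add: partial_fourier_def)
    with True show ?thesis by (simp add: partial_fourier_inv_def fourier_inv_fourier)
  qed (use assms in \<open>auto simp: partial_fourier_inv_def\<close>)
qed

lemma partial_fourier_partial_fourier_inv:
  assumes "\<forall>x. x \<notin> {0..<int n} \<times> N \<longrightarrow> b x = 0"
  shows "partial_fourier N (partial_fourier_inv N b) = b"
proof (intro ext, clarify)
  fix m f
  show "partial_fourier N (partial_fourier_inv N b) (m, f) = b (m, f)"
  proof (cases "m \<in> {0..<int n} \<and> f \<in> N")
    case True
    then have "fourier (\<lambda>l. partial_fourier_inv N b (l, f)) m = fourier (fourier_inv (\<lambda>m. b (m, f))) m"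
      by (intro fourier_cong) (simp add: partial_fourier_inv_def)
    with True show ?thesis by (simp add: partial_fourier_def fourier_fourier_inv)
  qed (use assms in \<open>auto simp: partial_fourier_def\<close>)
qed

lemma bij_partial_fourier:
  "bij_betw (partial_fourier N)
     {a. \<forall>x. x \<notin> H \<times> N \<longrightarrow> a x = 0} {b. \<forall>x. x \<notin> {0..<int n} \<times> N \<longrightarrow> b x = 0}"
  using partial_fourier_inv_partial_fourier partial_fourier_partial_fourier_inv
  by (intro bij_betw_byWitness[where f' = "partial_fourier_inv N"])
    (blast, blast, auto simp: partial_fourier_def partial_fourier_inv_def)

lemma partial_fourier_convolution:
  assumes "\<And>f g. f \<in> N \<Longrightarrow> g \<in> N \<Longrightarrow> d f g \<in> N"
  shows "partial_fourier N
      (\<lambda>(l, g). if l \<in> H \<and> g \<in> N then \<Sum>f\<in>N. a (l, f) * b (l, d f g) else 0) (m, g)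
    = (if m \<in> {0..<int n} \<and> g \<in> N then
         \<Sum>m'\<in>{0..<int n}. \<Sum>f\<in>N.
           partial_fourier N a (m', f) * partial_fourier N b ((m - m') mod int n, d f g)
       else 0)"
proof (cases "m \<in> {0..<int n} \<and> g \<in> N")
  case True
  have "(\<Sum>m'\<in>{0..<int n}. \<Sum>f\<in>N.
           partial_fourier N a (m', f) * partial_fourier N b ((m - m') mod int n, d f g))
      = (\<Sum>f\<in>N. \<Sum>m'\<in>{0..<int n}.
           fourier (\<lambda>l. a (l, f)) m' * fourier (\<lambda>l. b (l, d f g)) ((m - m') mod int n))"
    using n_pos assms True by (subst sum.swap) (auto simp: partial_fourier_def intro!: sum.cong)
  also have "\<dots> = fourier (\<lambda>l. \<Sum>f\<in>N. a (l, f) * b (l, d f g)) m"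
    by (simp add: fourier_convolution fourier_sum)
  also have "\<dots> = partial_fourier N
      (\<lambda>(l, g). if l \<in> H \<and> g \<in> N then \<Sum>f\<in>N. a (l, f) * b (l, d f g) else 0) (m, g)"
    using True by (simp add: partial_fourier_def cong: fourier_cong)
  finally show ?thesis using True by simp
qed (auto simp: partial_fourier_def)

lemma partial_fourier_one:
  assumes "e \<in> N"
  shows "partial_fourier N (\<lambda>(l, f). if l \<in> H \<and> f = e then 1 else 0)
    = (\<lambda>x. if x = (0, e) then 1 else 0)"
  using assms n_pos fourier_one fourier_scale[of 0 "\<lambda>_. 1"]
  by (auto simp: partial_fourier_def fun_eq_iff cong: fourier_cong)

lemma kalg_iso_partial_fourier:
  assumes "group G" "N \<lhd> G" "subgroup H G" "H \<inter> N = {\<one>\<^bsub>G\<^esub>}" "finite N"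
  defines "K \<equiv> integer_mod_group n \<times>\<times> G\<lparr>carrier := N\<rparr>"
  shows "kalg_iso (bismash_carrier H N) (bismash_mult G H N) (bismash_one G H N)
    (galg_carrier K) (galg_mult K) (galg_one K) (partial_fourier N)"
proof -
  have N: "subgroup N G" using assms(2) by (rule normal_imp_subgroup)
  have carrier_K: "carrier K = {0..<int n} \<times> N"
    using n_pos by (simp add: K_def carrier_integer_mod_group)
  have mult_B: "bismash_mult G H N a b = (\<lambda>(l, g). if l \<in> H \<and> g \<in> N then
      \<Sum>f\<in>N. a (l, f) * b (l, inv\<^bsub>G\<^esub> f \<otimes>\<^bsub>G\<^esub> g) else 0)" for a b :: "'h \<times> 'h \<Rightarrow> 'k"
    by (simp add: fun_eq_iff group.bismash_mult_normal_complement[OF assms(1-5)])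
  have mult_K: "galg_mult K a b = (\<lambda>(m, g). if m \<in> {0..<int n} \<and> g \<in> N then
      \<Sum>m'\<in>{0..<int n}. \<Sum>f\<in>N. a (m', f) * b ((m - m') mod int n, inv\<^bsub>G\<^esub> f \<otimes>\<^bsub>G\<^esub> g)
      else 0)" for a b :: "int \<times> 'h \<Rightarrow> 'k"
    by (simp add: fun_eq_iff K_def galg_mult_integer_mod_group_DirProd[OF assms(1) N n_pos])
  have closed: "inv\<^bsub>G\<^esub> f \<otimes>\<^bsub>G\<^esub> g \<in> N" if "f \<in> N" "g \<in> N" for f g
    using that by (simp add: subgroup.m_closed[OF N] subgroup.m_inv_closed[OF N])
  show ?thesis
    unfolding kalg_iso_def
  proof (intro conjI ballI allI)
    show "bij_betw (partial_fourier N) (bismash_carrier H N) (galg_carrier K)"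
      using bij_partial_fourier by (simp add: bismash_carrier_def galg_carrier_def carrier_K)
    show "partial_fourier N (bismash_one G H N) = galg_one K"
      using partial_fourier_one[OF subgroup.one_closed[OF N]]
      by (simp add: bismash_one_def galg_one_def K_def)
  next
    fix a b :: "'h \<times> 'h \<Rightarrow> 'k"
    show "partial_fourier N (bismash_mult G H N a b) = galg_mult K (partial_fourier N a) (partial_fourier N b)"
      by (simp add: fun_eq_iff mult_B mult_K
          partial_fourier_convolution[where d = "\<lambda>f g. inv\<^bsub>G\<^esub> f \<otimes>\<^bsub>G\<^esub> g", OF closed])
    show "partial_fourier N (\<lambda>x. a x + b x) = (\<lambda>y. partial_fourier N a y + partial_fourier N b y)"
      by (auto simp: partial_fourier_def fourier_add)
  next
    fix c :: 'k and a :: "'h \<times> 'h \<Rightarrow> 'k"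
    show "partial_fourier N (\<lambda>x. c * a x) = (\<lambda>y. c * partial_fourier N a y)"
      by (auto simp: partial_fourier_def fourier_scale)
  qed
qed

end

theorem mainTheorem12:
  fixes G :: "('g, 'm) monoid_scheme" and H N :: "'g set"
  assumes "alg_closed TYPE('k::field_char_0)"
    and "group G" and "finite (carrier G)"
    and "N \<lhd> G" and "subgroup H G"
    and "H \<inter> N = {\<one>\<^bsub>G\<^esub>}" and "N <#>\<^bsub>G\<^esub> H = carrier G"
  shows "factorized_group G H N \<and>
    (\<exists>\<phi> :: ('g \<times> 'g \<Rightarrow> 'k) \<Rightarrow> (int \<times> 'g \<Rightarrow> 'k).
       kalg_iso (bismash_carrier H N) (bismash_mult G H N) (bismash_one G H N)
         (galg_carrier (integer_mod_group (card H) \<times>\<times> G\<lparr>carrier := N\<rparr>))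
         (galg_mult (integer_mod_group (card H) \<times>\<times> G\<lparr>carrier := N\<rparr>))
         (galg_one (integer_mod_group (card H) \<times>\<times> G\<lparr>carrier := N\<rparr>)) \<phi>)"
proof -
  have N: "subgroup N G" using assms(4) by (rule normal_imp_subgroup)
  have "factorized_group G H N"
    unfolding factorized_group_def
    using assms N group.commut_normal[OF assms(2,5,4)] by auto
  have "finite H" using finite_subset[OF subgroup.subset[OF assms(5)] assms(3)] .
  have "finite N" using finite_subset[OF subgroup.subset[OF N] assms(3)] .
  have "0 < card H" using \<open>finite H\<close> subgroup.one_closed[OF assms(5)] card_gt_0_iff by blast
  then obtain \<rho> :: "'g \<Rightarrow> 'k" where "bij_betw \<rho> H {x. x ^ card H = 1}"
    using finite_same_card_bij[OF \<open>finite H\<close> finite_roots_of_unity]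
      card_roots_of_unity[OF assms(1)] by metis
  then interpret root_of_unity_labelling H "card H" \<rho>
    using \<open>0 < card H\<close> by unfold_locales simp_all
  show ?thesis
    using \<open>factorized_group G H N\<close> kalg_iso_partial_fourier[OF assms(2,4,5,6) \<open>finite N\<close>] by blast
qed

end
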